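(* Let $W=(w_{ij})\in\mathbb{R}^{n\times n}$ be a symmetric positive definite matrix, and define $\widetilde w_{ij}=w_{ij}+w_{ii}+w_{jj}$ for $i\ne j$. For $S\subseteq[n]$ let $$w(S)=\sum_{\{i,j\}\subseteq S,\ i\neq j} w_{ij}+\sum_{i\in S}w_{ii},\qquad \widetilde w(S)=\sum_{\{i,j\}\subseteq S,\ i\ne j}\widetilde w_{ij},$$ where the sums over $\{i,j\}$ range over unordered pairs of distinct elements. Then for every nonempty $S\subseteq[n]$, $$\frac{\widetilde w(S)}{w(S)}\le (|S|-1)\frac{\lambda_{\max}(W)}{\lambda_{\min}(W)},$$ where $\lambda_{\min}(W),\lambda_{\max}(W)$ are the minimum and maximum eigenvalues of $W$. *)

theory Defs
  imports "HOL-Analysis.Analysis"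
begin

text \<open>Matrices in R^{n x n} are rendered as real^'n^'n, with [n] = UNIV :: 'n set.\<close>

definition is_eigenvalue :: "real^'n^'n \<Rightarrow> real \<Rightarrow> bool" where
  "is_eigenvalue W l \<longleftrightarrow> (\<exists>v. v \<noteq> 0 \<and> W *v v = l *\<^sub>R v)"

definition lambda_max :: "real^'n^'n \<Rightarrow> real" where
  "lambda_max W = Max {l. is_eigenvalue W l}"

definition lambda_min :: "real^'n^'n \<Rightarrow> real" where
  "lambda_min W = Min {l. is_eigenvalue W l}"

definition symmetric_mat :: "real^'n^'n \<Rightarrow> bool" where
  "symmetric_mat W \<longleftrightarrow> transpose W = W"

definition pos_def :: "real^'n^'n \<Rightarrow> bool" where
  "pos_def W \<longleftrightarrow> (\<forall>x. x \<noteq> 0 \<longrightarrow> x \<bullet> (W *v x) > 0)"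

definition wt :: "real^'n^'n \<Rightarrow> 'n \<Rightarrow> 'n \<Rightarrow> real" where
  "wt W i j = W$i$j + W$i$i + W$j$j"

text \<open>Sums over unordered pairs {i,j} of distinct elements of S, written as half of the
  sum over ordered pairs (the summands are symmetric in i, j).\<close>
definition wS :: "real^'n^'n \<Rightarrow> 'n set \<Rightarrow> real" where
  "wS W S = (\<Sum>i\<in>S. \<Sum>j\<in>S - {i}. W$i$j) / 2 + (\<Sum>i\<in>S. W$i$i)"

definition wtS :: "real^'n^'n \<Rightarrow> 'n set \<Rightarrow> real" where
  "wtS W S = (\<Sum>i\<in>S. \<Sum>j\<in>S - {i}. wt W i j) / 2"

end

theory Submission imports Defs begin

text \<open>Let \<open>a\<close> be the sum of all entries of the principal submatrix \<open>W[S]\<close> and \<open>t\<close> its trace,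
  and \<open>k = |S|\<close>. Then \<open>2 w(S) = a + t\<close> and \<open>2 w~(S) = a + (2k - 3) t\<close>. Testing the Rayleigh
  quotient on the indicator vector of \<open>S\<close> gives \<open>a \<ge> k \<lambda>\<^sub>m\<^sub>i\<^sub>n\<close>, and on unit vectors gives
  \<open>\<lambda>\<^sub>m\<^sub>i\<^sub>n \<le> w\<^sub>i\<^sub>i \<le> \<lambda>\<^sub>m\<^sub>a\<^sub>x\<close>, so \<open>0 \<le> t \<le> k \<lambda>\<^sub>m\<^sub>a\<^sub>x \<le> r a\<close> with \<open>r = \<lambda>\<^sub>m\<^sub>a\<^sub>x / \<lambda>\<^sub>m\<^sub>i\<^sub>n \<ge> 1\<close>. The claim is
  then the elementary inequality \<open>a + (2k - 3) t \<le> (k - 1) r (a + t)\<close>. The extreme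
  eigenvalues of a symmetric matrix are obtained as the extrema of its Rayleigh quotient
  on the unit sphere.\<close>

subsection \<open>Extreme eigenvalues of symmetric matrices\<close>

lemma symmetric_mat_inner_mult:
  fixes W :: "real^'n^'n"
  assumes "symmetric_mat W"
  shows "x \<bullet> (W *v y) = (W *v x) \<bullet> y"
proof -
  have "x \<bullet> (W *v y) = (x v* W) \<bullet> y" by (simp add: dot_lmul_matrix)
  also have "x v* W = transpose W *v x" by simp
  also have "\<dots> = W *v x" using assms by (simp add: symmetric_mat_def)
  finally show ?thesis .
qed

lemma symmetric_mat_uminus: "symmetric_mat W \<Longrightarrow> symmetric_mat (- W)"
  by (simp add: symmetric_mat_def vec_eq_iff transpose_def)

lemma matrix_vector_mult_uminus: "(- W) *v x = - (W *v (x::real^'n))"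
  by (simp add: vec_eq_iff matrix_vector_mult_def sum_negf)

lemma is_eigenvalue_uminus:
  fixes W :: "real^'n^'n"
  shows "is_eigenvalue (- W) l \<longleftrightarrow> is_eigenvalue W (- l)"
proof -
  have "(- W) *v v = l *\<^sub>R v \<longleftrightarrow> W *v v = (- l) *\<^sub>R v" for v
    unfolding matrix_vector_mult_uminus scaleR_minus_left by (metis minus_minus)
  then show ?thesis by (simp only: is_eigenvalue_def)
qed

lemma nonpos_if_linear_le_quadratic:
  fixes c d :: real
  assumes "\<And>t. t > 0 \<Longrightarrow> t * c \<le> t\<^sup>2 * d"
  shows "c \<le> 0"
proof (rule ccontr)
  assume "\<not> c \<le> 0"
  have d1: "\<bar>d\<bar> + 1 > 0" by simp
  define t where "t = c / (2 * (\<bar>d\<bar> + 1))"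
  have "t > 0" using \<open>\<not> c \<le> 0\<close> d1 unfolding t_def by simp
  have "t * c \<le> t * (t * d)" using assms[OF \<open>t > 0\<close>] by (simp add: power2_eq_square mult.assoc)
  then have "c \<le> t * d" using \<open>t > 0\<close> by (rule mult_left_le_imp_le)
  also have "\<dots> \<le> t * (\<bar>d\<bar> + 1)" using \<open>t > 0\<close> by (intro mult_left_mono) auto
  also have "\<dots> = c / 2" using d1 unfolding t_def by (simp add: field_simps)
  finally show False using \<open>\<not> c \<le> 0\<close> by linarith
qed

text \<open>With \<open>z = \<mu> v - W v\<close>, the nonnegative quadratic form \<open>\<mu> |x|\<^sup>2 - x \<bullet> W x\<close> evaluated
  at \<open>v - t z\<close> equals \<open>- 2 t |z|\<^sup>2 + O(t\<^sup>2)\<close>, which forces \<open>z = 0\<close>.\<close>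

lemma rayleigh_maximizer_is_eigenvector:
  fixes W :: "real^'n^'n"
  assumes sym: "symmetric_mat W"
    and bound: "\<And>x. x \<bullet> (W *v x) \<le> \<mu> * (x \<bullet> x)"
    and attained: "v \<bullet> (W *v v) = \<mu> * (v \<bullet> v)"
  shows "W *v v = \<mu> *\<^sub>R v"
proof -
  define z where "z = \<mu> *\<^sub>R v - W *v v"
  define d where "d = \<mu> * (z \<bullet> z) - z \<bullet> (W *v z)"
  have z_inner_self: "z \<bullet> z = \<mu> * (z \<bullet> v) - z \<bullet> (W *v v)"
    by (subst (2) z_def) (simp add: inner_diff_right)
  have "t * (2 * (z \<bullet> z)) \<le> t\<^sup>2 * d" for t
  proof -
    have "v \<bullet> (W *v z) = z \<bullet> (W *v v)"
      using symmetric_mat_inner_mult[OF sym, of v z] by (simp add: inner_commute)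
    then have form_expansion: "(v - t *\<^sub>R z) \<bullet> (W *v (v - t *\<^sub>R z))
        = v \<bullet> (W *v v) - 2 * t * (z \<bullet> (W *v v)) + t\<^sup>2 * (z \<bullet> (W *v z))"
      by (simp add: matrix_vector_mult_diff_distrib matrix_vector_mult_scaleR inner_diff_left
          inner_diff_right algebra_simps power2_eq_square)
    have norm_expansion: "(v - t *\<^sub>R z) \<bullet> (v - t *\<^sub>R z) = v \<bullet> v - 2 * t * (z \<bullet> v) + t\<^sup>2 * (z \<bullet> z)"
      using inner_commute[of v z]
      by (simp add: inner_diff_left inner_diff_right algebra_simps power2_eq_square)
    have "t\<^sup>2 * d - t * (2 * (z \<bullet> z))
        = \<mu> * ((v - t *\<^sub>R z) \<bullet> (v - t *\<^sub>R z)) - (v - t *\<^sub>R z) \<bullet> (W *v (v - t *\<^sub>R z))"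
      unfolding form_expansion norm_expansion d_def attained z_inner_self by (simp add: algebra_simps)
    then show ?thesis using bound[of "v - t *\<^sub>R z"] by linarith
  qed
  then have "2 * (z \<bullet> z) \<le> 0" by (intro nonpos_if_linear_le_quadratic)
  then have "z = 0" using inner_gt_zero_iff[of z] by linarith
  then show ?thesis by (simp add: z_def)
qed

lemma symmetric_mat_max_eigenpair:
  fixes W :: "real^'n^'n"
  assumes "symmetric_mat W"
  obtains v \<mu> where "v \<noteq> 0" "W *v v = \<mu> *\<^sub>R v" "\<And>x. x \<bullet> (W *v x) \<le> \<mu> * (x \<bullet> x)"
proof -
  let ?q = "\<lambda>x. x \<bullet> (W *v x)"
  have "continuous_on (sphere 0 1) ?q"
    by (intro continuous_intros linear_continuous_on matrix_vector_mul_linear_gen linear_linear)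
  moreover have "sphere (0::real^'n) 1 \<noteq> {}" by simp
  ultimately obtain v where v: "v \<in> sphere 0 1" and vmax: "\<And>y. y \<in> sphere 0 1 \<Longrightarrow> ?q y \<le> ?q v"
    using continuous_attains_sup[OF compact_sphere] by blast
  have vv: "v \<bullet> v = 1" using v by (simp add: dot_square_norm)
  have bound: "?q x \<le> ?q v * (x \<bullet> x)" for x
  proof (cases "x = 0")
    case False
    define u where "u = (1 / norm x) *\<^sub>R x"
    have "u \<in> sphere 0 1" using False by (simp add: u_def)
    have "?q x = (norm x)\<^sup>2 * ?q u"
      using False by (simp add: u_def matrix_vector_mult_scaleR power2_eq_square)
    also have "\<dots> \<le> (norm x)\<^sup>2 * ?q v" using vmax[OF \<open>u \<in> sphere 0 1\<close>] by (simp add: mult_left_mono)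
    finally show ?thesis by (simp add: dot_square_norm mult.commute)
  qed simp
  have "W *v v = ?q v *\<^sub>R v"
    using rayleigh_maximizer_is_eigenvector[OF assms bound] vv by simp
  moreover have "v \<noteq> 0" using v by auto
  ultimately show ?thesis using bound that by blast
qed

lemma symmetric_mat_finite_eigenvalues:
  fixes W :: "real^'n^'n"
  assumes sym: "symmetric_mat W"
  shows "finite {l. is_eigenvalue W l}"
proof -
  define E where "E = {l. is_eigenvalue W l}"
  define f where "f l = (SOME v. v \<noteq> 0 \<and> W *v v = l *\<^sub>R v)" for l
  have fE: "f l \<noteq> 0 \<and> W *v f l = l *\<^sub>R f l" if "l \<in> E" for l
    unfolding f_def by (rule someI_ex) (use that in \<open>simp add: E_def is_eigenvalue_def\<close>)
  have inj: "inj_on f E"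
  proof (rule inj_onI)
    fix l l' assume "l \<in> E" "l' \<in> E" "f l = f l'"
    then have "l *\<^sub>R f l = l' *\<^sub>R f l" "f l \<noteq> 0" using fE by metis+
    then show "l = l'" by (simp add: scaleR_cancel_right)
  qed
  have "pairwise orthogonal (f ` E)"
  proof (clarsimp simp: pairwise_def)
    fix l l' assume l: "l \<in> E" and l': "l' \<in> E" and "f l \<noteq> f l'"
    then have "l \<noteq> l'" by auto
    have "l * (f l \<bullet> f l') = f l \<bullet> (W *v f l')"
      using fE[OF l] symmetric_mat_inner_mult[OF sym, of "f l" "f l'"] by simp
    also have "\<dots> = l' * (f l \<bullet> f l')" using fE[OF l'] by simp
    finally show "orthogonal (f l) (f l')" using \<open>l \<noteq> l'\<close> by (simp add: orthogonal_def)
  qed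
  moreover have "0 \<notin> f ` E" using fE by auto
  ultimately have "finite (f ` E)"
    using pairwise_orthogonal_independent independent_bound by blast
  then show ?thesis using inj finite_imageD unfolding E_def by blast
qed

lemma is_eigenvalueE:
  assumes "is_eigenvalue W l"
  obtains u where "u \<bullet> u > 0" "u \<bullet> (W *v u) = l * (u \<bullet> u)"
  using assms unfolding is_eigenvalue_def by force

lemma symmetric_mat_lambda_max:
  fixes W :: "real^'n^'n"
  assumes sym: "symmetric_mat W"
  shows "is_eigenvalue W (lambda_max W)" "x \<bullet> (W *v x) \<le> lambda_max W * (x \<bullet> x)"
proof -
  obtain v \<mu> where "v \<noteq> 0" "W *v v = \<mu> *\<^sub>R v" and bound: "\<And>x. x \<bullet> (W *v x) \<le> \<mu> * (x \<bullet> x)"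
    using symmetric_mat_max_eigenpair[OF sym] by blast
  then have ev: "is_eigenvalue W \<mu>" by (auto simp: is_eigenvalue_def)
  have "l \<le> \<mu>" if l: "is_eigenvalue W l" for l
  proof -
    obtain u where "u \<bullet> u > 0" "u \<bullet> (W *v u) = l * (u \<bullet> u)"
      using is_eigenvalueE[OF l] .
    then show ?thesis using bound[of u] by simp
  qed
  then have "lambda_max W = \<mu>"
    unfolding lambda_max_def using symmetric_mat_finite_eigenvalues[OF sym] ev
    by (intro Max_eqI) auto
  then show "is_eigenvalue W (lambda_max W)" "x \<bullet> (W *v x) \<le> lambda_max W * (x \<bullet> x)"
    using ev bound by simp_all
qed

lemma lambda_min_eq_uminus_lambda_max:
  fixes W :: "real^'n^'n"
  assumes "symmetric_mat W"
  shows "lambda_min W = - lambda_max (- W)"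
proof -
  have "{l. is_eigenvalue W l} = uminus ` {l. is_eigenvalue (- W) l}"
    by (auto simp: is_eigenvalue_uminus image_iff) (metis minus_minus)
  moreover have "finite {l. is_eigenvalue (- W) l}" "{l. is_eigenvalue (- W) l} \<noteq> {}"
    using symmetric_mat_finite_eigenvalues symmetric_mat_lambda_max(1) symmetric_mat_uminus[OF assms]
    by blast+
  ultimately show ?thesis
    unfolding lambda_min_def lambda_max_def by simp
qed

lemma symmetric_mat_lambda_min:
  fixes W :: "real^'n^'n"
  assumes sym: "symmetric_mat W"
  shows "is_eigenvalue W (lambda_min W)" "lambda_min W * (x \<bullet> x) \<le> x \<bullet> (W *v x)"
  using symmetric_mat_lambda_max(1)[OF symmetric_mat_uminus[OF sym]]
    symmetric_mat_lambda_max(2)[OF symmetric_mat_uminus[OF sym], of x]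
  by (simp_all add: lambda_min_eq_uminus_lambda_max[OF sym] is_eigenvalue_uminus
      matrix_vector_mult_uminus)

lemma pos_def_lambda_min_pos:
  fixes W :: "real^'n^'n"
  assumes "symmetric_mat W" "pos_def W"
  shows "lambda_min W > 0"
proof -
  obtain u where u: "u \<bullet> u > 0" "u \<bullet> (W *v u) = lambda_min W * (u \<bullet> u)"
    using is_eigenvalueE[OF symmetric_mat_lambda_min(1)[OF assms(1)]] .
  then have "u \<bullet> (W *v u) > 0" using assms(2) unfolding pos_def_def by auto
  then show ?thesis using u by (simp add: zero_less_mult_iff)
qed

lemma diagonal_entry_eq_quadratic_form: "W$i$i = axis i 1 \<bullet> (W *v axis i (1::real))"
  by (simp add: inner_axis' matrix_vector_mult_basis column_def)

lemma symmetric_mat_diagonal_bounds: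
  fixes W :: "real^'n^'n"
  assumes "symmetric_mat W"
  shows "lambda_min W \<le> W$i$i" "W$i$i \<le> lambda_max W"
  using symmetric_mat_lambda_min(2)[OF assms, of "axis i 1"]
    symmetric_mat_lambda_max(2)[OF assms, of "axis i 1"]
  by (simp_all add: diagonal_entry_eq_quadratic_form inner_axis)

lemma lambda_min_le_lambda_max:
  fixes W :: "real^'n^'n"
  assumes "symmetric_mat W"
  shows "lambda_min W \<le> lambda_max W"
  using symmetric_mat_diagonal_bounds[OF assms] by (meson order.trans)

subsection \<open>Entry sums of a principal submatrix\<close>

definition block_sum :: "real^'n^'n \<Rightarrow> 'n set \<Rightarrow> real" where
  "block_sum W S = (\<Sum>i\<in>S. \<Sum>j\<in>S. W$i$j)"

definition diag_sum :: "real^'n^'n \<Rightarrow> 'n set \<Rightarrow> real" where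
  "diag_sum W S = (\<Sum>i\<in>S. W$i$i)"

definition indicator_vec :: "'n set \<Rightarrow> real^'n" where
  "indicator_vec S = (\<chi> i. if i \<in> S then 1 else 0)"

lemma inner_indicator_vec_self: "indicator_vec S \<bullet> indicator_vec S = real (card S)"
  by (simp add: indicator_vec_def inner_vec_def if_distrib sum.If_cases cong: if_cong)

lemma quadratic_form_indicator_vec:
  "indicator_vec S \<bullet> (W *v indicator_vec S) = block_sum W S"
proof -
  have "indicator_vec S \<bullet> (W *v indicator_vec S)
      = (\<Sum>i\<in>UNIV. if i \<in> S then (\<Sum>j\<in>UNIV. if j \<in> S then W$i$j else 0) else 0)"
    unfolding indicator_vec_def inner_vec_def matrix_vector_mult_def
    by (intro sum.cong refl) (auto intro: sum.cong)
  then show ?thesis by (simp add: sum.If_cases block_sum_def Int_absorb1)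
qed

lemma offdiag_sum_eq:
  fixes W :: "real^'n^'n"
  shows "(\<Sum>i\<in>S. \<Sum>j\<in>S - {i}. W$i$j) = block_sum W S - diag_sum W S"
proof -
  have "block_sum W S = (\<Sum>i\<in>S. W$i$i + (\<Sum>j\<in>S - {i}. W$i$j))"
    unfolding block_sum_def by (intro sum.cong) (simp_all add: sum.remove)
  then show ?thesis by (simp add: sum.distrib diag_sum_def)
qed

lemma wS_eq: "wS W S = (block_sum W S + diag_sum W S) / 2"
  unfolding wS_def offdiag_sum_eq by (simp add: diag_sum_def field_simps)

lemma wtS_eq:
  "wtS W S = (block_sum W S + (2 * real (card S) - 3) * diag_sum W S) / 2"
proof -
  have "(\<Sum>j\<in>S - {i}. wt W i j)
      = (\<Sum>j\<in>S - {i}. W$i$j) + (real (card S) - 1) * W$i$i + (diag_sum W S - W$i$i)"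
    if "i \<in> S" for i
  proof -
    have "card S \<ge> 1" using that by (metis One_nat_def Suc_leI card_gt_0_iff empty_iff finite)
    then show ?thesis using that by (simp add: wt_def sum.distrib diag_sum_def sum_diff1 card_Diff_singleton
        of_nat_diff)
  qed
  then have "(\<Sum>i\<in>S. \<Sum>j\<in>S - {i}. wt W i j)
      = (block_sum W S - diag_sum W S) + (real (card S) - 1) * diag_sum W S
        + (real (card S) * diag_sum W S - diag_sum W S)"
    by (simp add: sum.distrib offdiag_sum_eq sum_subtractf diag_sum_def
        flip: sum_distrib_left)
  then show ?thesis unfolding wtS_def by (simp add: algebra_simps)
qed

lemma block_sum_singleton: "block_sum W {i} = diag_sum W {i}"
  by (simp add: block_sum_def diag_sum_def)

lemma block_sum_pos:
  fixes W :: "real^'n^'n"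
  assumes "pos_def W" "S \<noteq> {}"
  shows "block_sum W S > 0"
proof -
  have "indicator_vec S \<noteq> 0" using assms(2) by (auto simp: indicator_vec_def vec_eq_iff)
  then have "indicator_vec S \<bullet> (W *v indicator_vec S) > 0" using assms(1) unfolding pos_def_def by blast
  then show ?thesis by (simp only: quadratic_form_indicator_vec)
qed

lemma diag_sum_nonneg:
  fixes W :: "real^'n^'n"
  assumes "pos_def W"
  shows "diag_sum W S \<ge> 0"
  unfolding diag_sum_def
proof (intro sum_nonneg)
  fix i :: 'n
  have "axis i (1::real) \<noteq> 0" by (simp add: axis_eq_0_iff)
  then have "axis i 1 \<bullet> (W *v axis i 1) > 0" using assms unfolding pos_def_def by blast
  then show "W$i$i \<ge> 0" by (subst diagonal_entry_eq_quadratic_form) (rule less_imp_le)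
qed

lemma block_sum_ge_lambda_min:
  fixes W :: "real^'n^'n"
  assumes "symmetric_mat W"
  shows "real (card S) * lambda_min W \<le> block_sum W S"
  using symmetric_mat_lambda_min(2)[OF assms, of "indicator_vec S"]
  by (simp add: inner_indicator_vec_self quadratic_form_indicator_vec mult.commute)

lemma diag_sum_le_lambda_max:
  fixes W :: "real^'n^'n"
  assumes "symmetric_mat W"
  shows "diag_sum W S \<le> real (card S) * lambda_max W"
  unfolding diag_sum_def
  using sum_bounded_above[of S "\<lambda>i. W$i$i"] symmetric_mat_diagonal_bounds(2)[OF assms]
  by (simp add: mult.commute)

text \<open>The difference of the two sides is \<open>(k - 2)(r a - t) + (r - 1)(a + (k - 1) t)\<close>.\<close>

lemma ratio_bound_elementary:
  fixes a t k r :: real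
  assumes "k \<ge> 2" "r \<ge> 1" "a \<ge> 0" "t \<ge> 0" "t \<le> r * a"
  shows "a + (2 * k - 3) * t \<le> (k - 1) * r * (a + t)"
proof -
  have "0 \<le> (k - 2) * (r * a - t) + (r - 1) * (a + (k - 1) * t)"
    using assms by (intro add_nonneg_nonneg mult_nonneg_nonneg) auto
  then show ?thesis by (simp add: algebra_simps)
qed

theorem lemma6:
  fixes W :: "real^'n^'n" and S :: "'n set"
  assumes "symmetric_mat W" and "pos_def W" and "S \<noteq> {}"
  shows "wtS W S / wS W S \<le> (real (card S) - 1) * (lambda_max W / lambda_min W)"
proof (cases "card S = 1")
  case True
  then obtain i where "S = {i}" by (auto simp: card_1_singleton_iff)
  then show ?thesis by (simp add: wtS_eq block_sum_singleton)
next
  case False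
  moreover have "card S \<noteq> 0" using \<open>S \<noteq> {}\<close> by (simp add: card_eq_0_iff)
  ultimately have "card S \<ge> 2" by linarith
  define a where "a = block_sum W S"
  define t where "t = diag_sum W S"
  define r where "r = lambda_max W / lambda_min W"
  have m: "lambda_min W > 0" using pos_def_lambda_min_pos[OF assms(1,2)] .
  have a: "a > 0" using block_sum_pos[OF assms(2,3)] by (simp add: a_def)
  have t: "t \<ge> 0" using diag_sum_nonneg[OF assms(2)] by (simp add: t_def)
  have r: "r \<ge> 1" using lambda_min_le_lambda_max[OF assms(1)] m by (simp add: r_def)
  have "t \<le> real (card S) * lambda_max W"
    using diag_sum_le_lambda_max[OF assms(1)] by (simp add: t_def)
  also have "\<dots> = r * (real (card S) * lambda_min W)" using m by (simp add: r_def)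
  also have "\<dots> \<le> r * a"
    using block_sum_ge_lambda_min[OF assms(1)] r by (simp add: a_def)
  finally have "a + (2 * real (card S) - 3) * t \<le> (real (card S) - 1) * r * (a + t)"
    using ratio_bound_elementary \<open>card S \<ge> 2\<close> r a t by simp
  then have "(a + (2 * real (card S) - 3) * t) / (a + t) \<le> (real (card S) - 1) * r"
    using a t by (simp add: pos_divide_le_eq)
  moreover have "wtS W S / wS W S = (a + (2 * real (card S) - 3) * t) / (a + t)"
    using a t by (simp add: wtS_eq wS_eq field_simps flip: a_def t_def)
  ultimately show ?thesis by (simp add: r_def)
qed

end
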